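(* Let $s\ge 1$, $i$ and $j'$ be integers with $s\le i\le 2s$ and $0\le j'\le s$. Then $$\sum_{t=0}^{2s-i}\frac{(-1)^t}{2s-t}\binom{2s-i}{t}\binom{2s-t-1-j'}{s-j'}=\frac{(-1)^{s+i+j'}}{i}\binom{s}{j'}\binom{2s}{i}^{-1}+\sum_{t=1}^{s-j'}\frac{(-1)^{t+1}}{t}\binom{i-j'-1}{s+t-1}\binom{s}{t-1}\binom{s-j'}{t}^{-1}.$$
   Context: For an integer $b\ge 0$ and any integer $a$, $\binom{a}{b}=a(a-1)\cdots(a-b+1)/b!$; in particular $\binom{a}{b}=0$ when $0\le a<b$. An empty sum is $0$. *)

theory Defs
  imports Complex_Main
begin

end

theory Submission
  imports Defs
begin

(* With m = s - j and n = 2s - i, the left-hand side is the n-th backward difference at y = 2s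
   of g(y) = binom(y - j - 1, m) / y. Dividing binom(z, m) by z + j + 1 splits g into a polynomial
   in binomial-coefficient form plus the multiple (-1)^m binom(s, j) of 1/y. Differences of the
   polynomial part are shifted binomial coefficients and give the sum over t, after binomial
   symmetry; the n-th difference of 1/y at x is (-1)^n / ((n + 1) binom(x, n + 1)), which gives
   the first term. *)

fun backward_diff :: "nat \<Rightarrow> (real \<Rightarrow> real) \<Rightarrow> real \<Rightarrow> real" where
  "backward_diff 0 f x = f x"
| "backward_diff (Suc n) f x = backward_diff n f x - backward_diff n f (x - 1)"

lemma backward_diff_eq_sum:
  "backward_diff n f x = (\<Sum>t\<le>n. (-1)^t * real (n choose t) * f (x - real t))"
proof (induction n arbitrary: x)
  case 0
  then show ?case by simp
next
  case (Suc n)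
  have "(\<Sum>t\<le>Suc n. (-1)^t * real (Suc n choose t) * f (x - real t))
      = (\<Sum>t\<le>Suc n. (-1)^t * real (n choose t) * f (x - real t))
        + (\<Sum>t\<le>n. (-1)^Suc t * real (n choose t) * f (x - 1 - real t))"
    by (simp add: sum.atMost_Suc_shift sum.distrib sum_subtractf sum_negf algebra_simps del: sum.atMost_Suc)
  also have "\<dots> = backward_diff n f x - backward_diff n f (x - 1)"
    by (simp add: Suc.IH sum_negf)
  finally show ?case by simp
qed

lemma backward_diff_cong:
  assumes "\<And>t. t \<le> n \<Longrightarrow> f (x - real t) = g (x - real t)"
  shows "backward_diff n f x = backward_diff n g x"
  using assms by (simp add: backward_diff_eq_sum)

lemma backward_diff_linear:
  "backward_diff n (\<lambda>y. a * f y + b * g y) x = a * backward_diff n f x + b * backward_diff n g x"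
  by (induction n arbitrary: x) (simp_all add: algebra_simps)

lemma backward_diff_sum:
  "backward_diff n (\<lambda>y. \<Sum>u\<in>A. c u * g u y) x = (\<Sum>u\<in>A. c u * backward_diff n (g u) x)"
  by (induction n arbitrary: x) (simp_all add: sum_subtractf right_diff_distrib)

lemma backward_diff_gbinomial:
  "backward_diff n (\<lambda>y. (y - c) gchoose r) x
     = (if n \<le> r then (x - c - real n) gchoose (r - n) else 0)"
proof (induction n arbitrary: x)
  case 0
  then show ?case by simp
next
  case (Suc n)
  show ?case
  proof (cases "Suc n \<le> r")
    case True
    then have "r - n = Suc (r - Suc n)"
      by simp
    then show ?thesis
      using True Suc.IH[of x] Suc.IH[of "x - 1"]
        gbinomial_Suc_Suc[of "x - 1 - c - real n" "r - Suc n"]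
      by (simp add: algebra_simps)
  next
    case False
    then show ?thesis
      using Suc.IH[of x] Suc.IH[of "x - 1"] by auto
  qed
qed

lemma backward_diff_inverse:
  assumes "x gchoose Suc n \<noteq> 0"
  shows "backward_diff n (\<lambda>y. 1 / y) x = (-1)^n / (real (Suc n) * (x gchoose Suc n))"
  using assms
proof (induction n arbitrary: x)
  case 0
  then show ?case by simp
next
  case (Suc n)
  define c where "c = x gchoose Suc (Suc n)"
  have upper: "real (Suc (Suc n)) * c = (x - real (Suc n)) * (x gchoose Suc n)"
    using gbinomial_mult_1[of x "Suc n"] unfolding c_def by (simp add: algebra_simps)
  have lower: "real (Suc (Suc n)) * c = x * ((x - 1) gchoose Suc n)"
    unfolding c_def by (rule gbinomial_absorption)
  have "c \<noteq> 0"
    using Suc.prems unfolding c_def .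
  then have "x gchoose Suc n \<noteq> 0" "(x - 1) gchoose Suc n \<noteq> 0"
    using upper lower by auto
  then have "backward_diff (Suc n) (\<lambda>y. 1 / y) x
      = (-1)^n / real (Suc n) * (1 / (x gchoose Suc n) - 1 / ((x - 1) gchoose Suc n))"
    using Suc.IH[of x] Suc.IH[of "x - 1"] by (simp add: right_diff_distrib del: of_nat_Suc)
  also have "\<dots> = (-1)^n / real (Suc n) * (((x - real (Suc n)) - x) / (real (Suc (Suc n)) * c))"
  proof -
    have "1 / (x gchoose Suc n) = (x - real (Suc n)) / (real (Suc (Suc n)) * c)"
         "1 / ((x - 1) gchoose Suc n) = x / (real (Suc (Suc n)) * c)"
      using \<open>c \<noteq> 0\<close> upper lower by (auto simp: divide_simps simp del: of_nat_Suc)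
    then show ?thesis
      by (simp only: diff_divide_distrib)
  qed
  also have "\<dots> = (-1)^Suc n / (real (Suc (Suc n)) * c)"
    by (simp add: field_simps del: of_nat_Suc)
  finally show ?case
    unfolding c_def .
qed

lemma backward_diff_inverse_of_nat:
  assumes "0 < i" and "i \<le> N"
  shows "backward_diff (N - i) (\<lambda>y. 1 / y) (real N) = (-1)^(N - i) / (real i * real (N choose i))"
proof -
  define n where "n = N - i"
  obtain b where i: "i = Suc b"
    using assms(1) gr0_implies_Suc by blast
  have N: "N = Suc (n + b)"
    using assms unfolding n_def i by simp
  have "Suc n * (N choose Suc n) = i * (N choose n)"
    unfolding N i by (rule Suc_times_binomial_add)
  also have "N choose n = N choose i"
    using binomial_symmetric[of n N] unfolding N i by simp
  finally have choose_eq: "real (Suc n) * real (N choose Suc n) = real i * real (N choose i)"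
    by (metis of_nat_mult)
  have "real N gchoose Suc n = real (N choose Suc n)"
    by (simp add: binomial_gbinomial)
  moreover have "N choose Suc n \<noteq> 0"
    unfolding N by simp
  ultimately show ?thesis
    using backward_diff_inverse[of "real N" n] choose_eq unfolding n_def by simp
qed

(* Quotient of (fact m / fact (m + j)) * binom(z, m) by z + j + 1, written in the basis binom(z, u). *)
definition gbinomial_quotient :: "nat \<Rightarrow> nat \<Rightarrow> real \<Rightarrow> real" where
  "gbinomial_quotient j m z = (\<Sum>u<m. (-1)^(m - u + 1) * fact u / fact (u + j + 1) * (z gchoose u))"

lemma gbinomial_quotient_Suc:
  "gbinomial_quotient j (Suc m) z
     = fact m / fact (m + j + 1) * (z gchoose m) - gbinomial_quotient j m z"
  unfolding gbinomial_quotient_def by (simp add: Suc_diff_le sum_negf)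

lemma gbinomial_quotient_mult:
  "(z + real j + 1) * gbinomial_quotient j m z
     = fact m / fact (m + j) * (z gchoose m) - (-1)^m / fact j"
proof (induction m)
  case 0
  then show ?case by (simp add: gbinomial_quotient_def)
next
  case (Suc m)
  define r :: real where "r = fact m / fact (m + j + 1)"
  have "fact m / fact (m + j) = real (m + j + 1) * r"
    unfolding r_def by (simp add: field_simps del: of_nat_Suc)
  then have "(z + real j + 1) * gbinomial_quotient j (Suc m) z
      = r * ((z - real m) * (z gchoose m)) + (-1)^m / fact j"
    using Suc.IH unfolding gbinomial_quotient_Suc r_def[symmetric]
    by (simp add: algebra_simps)
  also have "(z - real m) * (z gchoose m) = real (Suc m) * (z gchoose Suc m)"
    using gbinomial_mult_1[of z m] by (simp add: algebra_simps)
  also have "r * (real (Suc m) * (z gchoose Suc m)) + (-1)^m / fact j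
      = fact (Suc m) / fact (Suc m + j) * (z gchoose Suc m) - (-1)^Suc m / fact j"
    unfolding r_def by simp
  finally show ?case .
qed

lemma gbinomial_divide_partial_fraction:
  assumes "z + real j + 1 \<noteq> 0"
  shows "(z gchoose m) / (z + real j + 1)
     = fact (m + j) / fact m * gbinomial_quotient j m z
       + (-1)^m * real ((m + j) choose j) / (z + real j + 1)"
proof -
  have "real ((m + j) choose j) = fact (m + j) / fact m / fact j"
    by (simp add: binomial_fact)
  then have "z gchoose m
      = fact (m + j) / fact m * ((z + real j + 1) * gbinomial_quotient j m z)
        + (-1)^m * real ((m + j) choose j)"
    unfolding gbinomial_quotient_mult by (simp add: field_simps)
  with assms show ?thesis
    by (simp add: add_divide_distrib)
qed

lemma fact_quotient_eq_binomial_quotient: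
  assumes "0 < t" and "t \<le> m"
  shows "fact (m + j) / fact m * (fact (m - t) / fact (m - t + j + 1))
     = real ((m + j) choose (t - 1)) / (real t * real (m choose t))"
proof -
  obtain k where t: "t = Suc k"
    using assms(1) gr0_implies_Suc by blast
  have "m + j - k = m - t + j + 1"
    using assms unfolding t by simp
  then have "real (fact k * fact (m - t + j + 1) * ((m + j) choose k)) = real (fact (m + j))"
    using binomial_fact_lemma[of k "m + j"] assms unfolding t by simp
  then have num: "fact (m + j) = fact k * fact (m - t + j + 1) * real ((m + j) choose k)"
    by (simp only: of_nat_mult of_nat_fact)
  have "real (fact t * fact (m - t) * (m choose t)) = real (fact m)"
    using binomial_fact_lemma[of t m] assms by simp
  then have den: "fact m = real t * fact k * fact (m - t) * real (m choose t)"
    unfolding t by (simp only: of_nat_mult of_nat_fact fact_Suc of_nat_id)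
  have "real (m choose t) \<noteq> 0"
    using assms(2) by simp
  then show ?thesis
    unfolding num den by (simp add: t)
qed

lemma gbinomial_of_nat_shifted_symmetric:
  assumes "u \<le> a + n"
  shows "(if n \<le> u then real a gchoose (u - n) else 0) = real a gchoose (a + n - u)"
proof (cases "n \<le> u")
  case True
  with assms gbinomial_of_nat_symmetric[of "u - n" a, where 'a = real] show ?thesis
    by (simp add: diff_diff_left add.commute)
next
  case False
  then have "a < a + n - u"
    by simp
  with False show ?thesis
    by (simp flip: binomial_gbinomial)
qed

lemma backward_diff_gbinomial_quotient:
  assumes "s \<le> i" and "i \<le> 2 * s" and "j \<le> s"
  shows "fact s / fact (s - j)
           * backward_diff (2 * s - i) (\<lambda>y. gbinomial_quotient j (s - j) (y - real j - 1)) (real (2 * s))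
       = (\<Sum>t = 1..s - j. (-1) ^ (t + 1) / real t
              * ((real i - real j - 1) gchoose (s + t - 1)) * real (s choose (t - 1))
              / real ((s - j) choose t))"
proof -
  define m n a where "m = s - j" and "n = 2 * s - i" and "a = i - j - 1"
  have s: "s = m + j"
    using assms unfolding m_def by simp
  have expand: "(\<lambda>y. gbinomial_quotient j m (y - real j - 1))
      = (\<lambda>y. \<Sum>u<m. (-1)^(m - u + 1) * (fact u / fact (u + j + 1)) * ((y - (real j + 1)) gchoose u))"
    unfolding gbinomial_quotient_def by (simp add: algebra_simps)
  have "fact s / fact m * backward_diff n (\<lambda>y. gbinomial_quotient j m (y - real j - 1)) (real (2 * s))
      = (\<Sum>u<m. fact s / fact m * ((-1)^(m - u + 1) * (fact u / fact (u + j + 1)))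
           * (if n \<le> u then (real (2 * s) - (real j + 1) - real n) gchoose (u - n) else 0))"
    unfolding expand backward_diff_sum backward_diff_gbinomial by (simp add: sum_distrib_left mult.assoc)
  also have "\<dots> = (\<Sum>t = 1..m. fact s / fact m * ((-1)^(t + 1) * (fact (m - t) / fact (m - t + j + 1)))
           * (if n \<le> m - t then (real (2 * s) - (real j + 1) - real n) gchoose (m - t - n) else 0))"
    by (rule sum.reindex_bij_witness[of _ "\<lambda>t. m - t" "\<lambda>t. m - t"]) auto
  also have "\<dots> = (\<Sum>t = 1..m. (-1) ^ (t + 1) / real t
              * ((real i - real j - 1) gchoose (s + t - 1)) * real (s choose (t - 1))
              / real (m choose t))"
  proof (rule sum.cong[OF refl])
    fix t
    assume "t \<in> {1..m}"
    then have t: "0 < t" "t \<le> m"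
      by auto
    then have a: "real (2 * s) - (real j + 1) - real n = real a" "real i - real j - 1 = real a"
      and "m - t \<le> a + n" and "a + n - (m - t) = s + t - 1"
      using assms unfolding a_def m_def n_def by auto
    then have choose_eq: "(if n \<le> m - t then real a gchoose (m - t - n) else 0) = real a gchoose (s + t - 1)"
      using gbinomial_of_nat_shifted_symmetric by metis
    have "fact s / fact m * ((-1)^(t + 1) * (fact (m - t) / fact (m - t + j + 1)))
        = (-1::real)^(t + 1) * (fact (m + j) / fact m * (fact (m - t) / fact (m - t + j + 1)))"
      unfolding s by (rule mult.left_commute)
    also have "\<dots> = (-1)^(t + 1) * (real (s choose (t - 1)) / (real t * real (m choose t)))"
      unfolding fact_quotient_eq_binomial_quotient[OF t] s ..
    finally show "fact s / fact m * ((-1)^(t + 1) * (fact (m - t) / fact (m - t + j + 1)))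
           * (if n \<le> m - t then (real (2 * s) - (real j + 1) - real n) gchoose (m - t - n) else 0)
        = (-1) ^ (t + 1) / real t * ((real i - real j - 1) gchoose (s + t - 1))
           * real (s choose (t - 1)) / real (m choose t)"
      unfolding a choose_eq by simp
  qed
  finally show ?thesis
    unfolding m_def n_def .
qed

(* The hypothesis keeps the sample points x - t away from the pole y = 0, where x / 0 = 0 would
   break the partial fraction. *)
lemma backward_diff_gbinomial_divide:
  assumes "\<And>t. t \<le> n \<Longrightarrow> x \<noteq> real t"
  shows "backward_diff n (\<lambda>y. ((y - real j - 1) gchoose m) / y) x
     = fact (m + j) / fact m * backward_diff n (\<lambda>y. gbinomial_quotient j m (y - real j - 1)) x
       + (-1)^m * real ((m + j) choose j) * backward_diff n (\<lambda>y. 1 / y) x"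
proof -
  have "backward_diff n (\<lambda>y. ((y - real j - 1) gchoose m) / y) x
      = backward_diff n (\<lambda>y. fact (m + j) / fact m * gbinomial_quotient j m (y - real j - 1)
                              + (-1)^m * real ((m + j) choose j) * (1 / y)) x"
  proof (rule backward_diff_cong)
    fix t
    assume "t \<le> n"
    then have "(x - real t - real j - 1) + real j + 1 \<noteq> 0"
      using assms by simp
    from gbinomial_divide_partial_fraction[OF this, of m] show
      "((x - real t - real j - 1) gchoose m) / (x - real t)
       = fact (m + j) / fact m * gbinomial_quotient j m (x - real t - real j - 1)
         + (-1)^m * real ((m + j) choose j) * (1 / (x - real t))"
      by simp
  qed
  then show ?thesis
    by (simp only: backward_diff_linear)
qed

lemma binomial_times_backward_diff_inverse:
  assumes "s \<le> i" and "i \<le> 2 * s" and "j \<le> s" and "0 < i"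
  shows "(-1)^(s - j) * real (s choose j) * backward_diff (2 * s - i) (\<lambda>y. 1 / y) (real (2 * s))
       = (-1) ^ (s + i + j) / real i * real (s choose j) / real ((2 * s) choose i)"
proof -
  have "(s - j) + (2 * s - i) + 2 * (i + j - s) = s + i + j"
    using assms by simp
  then have "(-1::real) ^ (s + i + j) = (-1)^(s - j) * (-1)^(2 * s - i) * ((-1)^2)^(i + j - s)"
    by (metis power_add power_mult)
  then have sign: "(-1::real) ^ (s + i + j) = (-1)^(s - j) * (-1)^(2 * s - i)"
    by simp
  show ?thesis
    unfolding sign backward_diff_inverse_of_nat[OF assms(4,2)] by simp
qed

theorem proposition2:
  fixes s i j :: nat
  assumes "1 \<le> s" and "s \<le> i" and "i \<le> 2 * s" and "j \<le> s"
  shows "(\<Sum>t = 0..2 * s - i. (-1) ^ t / real (2 * s - t) * real ((2 * s - i) choose t)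
            * ((real (2 * s) - real t - 1 - real j) gchoose (s - j)))
       = (-1) ^ (s + i + j) / real i * real (s choose j) / real ((2 * s) choose i)
         + (\<Sum>t = 1..s - j. (-1) ^ (t + 1) / real t
              * ((real i - real j - 1) gchoose (s + t - 1)) * real (s choose (t - 1))
              / real ((s - j) choose t))"
proof -
  define m n where "m = s - j" and "n = 2 * s - i"
  have s: "m + j = s" and n: "n < 2 * s"
    using assms unfolding m_def n_def by auto
  have "(\<Sum>t = 0..2 * s - i. (-1) ^ t / real (2 * s - t) * real ((2 * s - i) choose t)
            * ((real (2 * s) - real t - 1 - real j) gchoose (s - j)))
      = backward_diff n (\<lambda>y. ((y - real j - 1) gchoose m) / y) (real (2 * s))"
    unfolding backward_diff_eq_sum atLeast0AtMost n_def[symmetric] m_def[symmetric]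
    by (rule sum.cong) (use n in \<open>auto simp: of_nat_diff algebra_simps\<close>)
  also have "\<dots> = (-1)^m * real (s choose j) * backward_diff n (\<lambda>y. 1 / y) (real (2 * s))
      + fact s / fact m * backward_diff n (\<lambda>y. gbinomial_quotient j m (y - real j - 1)) (real (2 * s))"
    using backward_diff_gbinomial_divide[of n "real (2 * s)" j m] n unfolding s by simp
  also have "(-1)^m * real (s choose j) * backward_diff n (\<lambda>y. 1 / y) (real (2 * s))
      = (-1) ^ (s + i + j) / real i * real (s choose j) / real ((2 * s) choose i)"
    using binomial_times_backward_diff_inverse[OF assms(2-4)] assms(1,2) unfolding m_def n_def by simp
  also have "fact s / fact m * backward_diff n (\<lambda>y. gbinomial_quotient j m (y - real j - 1)) (real (2 * s))
      = (\<Sum>t = 1..s - j. (-1) ^ (t + 1) / real t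
              * ((real i - real j - 1) gchoose (s + t - 1)) * real (s choose (t - 1))
              / real ((s - j) choose t))"
    using backward_diff_gbinomial_quotient[OF assms(2-4)] unfolding m_def n_def .
  finally show ?thesis .
qed

end
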